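(* Let $\mathbb{F}\subseteq\mathbb{C}$ be a subfield closed under complex conjugation, $m\ge2$, $N\ge1$. Let $\mathrm{v}=(v_1,\dots,v_m)\in\mathbb{F}^m$ have unit norm and let $V\in\mathbb{F}^{m\times m}$ be a unitary matrix whose first row is $\mathrm{v}$. Let $\mathbf{A}_1(z)=(a_{11}(z),\dots,a_{1m}(z))$ be a row of polynomials $a_{1j}(z)=\sum_{k=0}^N\alpha_{kj}z^k$, $\alpha_{kj}\in\mathbb{F}$, with $\sum_{j=1}^m|\alpha_{Nj}|>0$, such that $\mathbf{A}_1(z)\widetilde{\mathbf{A}_1}(z)=1$ for $z\in\mathbb{C}\setminus\{0\}$ and $\mathbf{A}_1(1)=\mathrm{v}$. Then there exists a unique $\mathbf{A}(z)\in\mathcal{WM}(m,N,N,\mathbb{F})$ with $\mathbf{A}(1)=V$ whose first row is $\mathbf{A}_1(z)$.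
   Context: For a Laurent polynomial $p(z)=\sum_kc_kz^k$, $\widetilde{p}(z)=\sum_k\overline{c_k}z^{-k}$; for a matrix of Laurent polynomials $P(z)=(p_{ij})$, $\widetilde{P}(z)=(\widetilde{p_{ij}})^T$. $\mathcal{WM}(m,N,N,\mathbb{F})$ is the set of matrix polynomials $\mathbf{A}(z)=\sum_{k=0}^NA_kz^k$ with $A_k\in\mathbb{F}^{m\times m}$, $A_N\ne0$, satisfying $\mathbf{A}(z)\widetilde{\mathbf{A}}(z)=I_m$ for $z\ne0$ (where $\widetilde{\mathbf{A}}(z)=\sum_kA_k^*z^{-k}$) and $\det\mathbf{A}(z)=c\,z^N$ for some constant $c$. *)

theory Defs
  imports Complex_Main "Jordan_Normal_Form.Determinant"
begin

definition conj_closed_subfield :: "complex set \<Rightarrow> bool" where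
  "conj_closed_subfield F \<longleftrightarrow> 0 \<in> F \<and> 1 \<in> F \<and>
     (\<forall>x\<in>F. \<forall>y\<in>F. x + y \<in> F \<and> x * y \<in> F) \<and>
     (\<forall>x\<in>F. - x \<in> F) \<and> (\<forall>x\<in>F. x \<noteq> 0 \<longrightarrow> inverse x \<in> F) \<and>
     (\<forall>x\<in>F. cnj x \<in> F)"

definition mpoly_eval :: "nat \<Rightarrow> nat \<Rightarrow> (nat \<Rightarrow> complex mat) \<Rightarrow> complex \<Rightarrow> complex mat" where
  "mpoly_eval m N C z = mat m m (\<lambda>(i,j). \<Sum>k\<le>N. C k $$ (i,j) * z ^ k)"

definition mpoly_tilde_eval :: "nat \<Rightarrow> nat \<Rightarrow> (nat \<Rightarrow> complex mat) \<Rightarrow> complex \<Rightarrow> complex mat" where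
  "mpoly_tilde_eval m N C z = mat m m (\<lambda>(i,j). \<Sum>k\<le>N. cnj (C k $$ (j,i)) * inverse z ^ k)"

definition WM :: "nat \<Rightarrow> nat \<Rightarrow> complex set \<Rightarrow> (nat \<Rightarrow> complex mat) \<Rightarrow> bool" where
  "WM m N F C \<longleftrightarrow>
     (\<forall>k. C k \<in> carrier_mat m m) \<and>
     (\<forall>k\<le>N. \<forall>i<m. \<forall>j<m. C k $$ (i,j) \<in> F) \<and>
     (\<forall>k>N. C k = 0\<^sub>m m m) \<and>
     C N \<noteq> 0\<^sub>m m m \<and>
     (\<forall>z. z \<noteq> 0 \<longrightarrow> mpoly_eval m N C z * mpoly_tilde_eval m N C z = 1\<^sub>m m) \<and>
     (\<exists>c. \<forall>z. det (mpoly_eval m N C z) = c * z ^ N)"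

definition conj_transpose :: "complex mat \<Rightarrow> complex mat" where
  "conj_transpose V = mat (dim_col V) (dim_row V) (\<lambda>(i,j). cnj (V $$ (j,i)))"

end

theory Submission
  imports Defs
begin

text \<open>For a row a \<noteq> 0 let P_a = a^* a / |a|^2 and T_a(z) = I + (z - 1) P_a; then
  T_a(z) T_a(w) = T_a(zw) and det T_a(z) = z. Let C(z) be a paraunitary polynomial of degree n + 1,
  either a row or a square matrix, whose leading coefficient has first row a. The coefficient of
  z^(-(n+1)) in C(z) C~(z) = I gives C_0 P_a = 0, so C(z) T_a(1/z) is again a paraunitary polynomial
  of degree at most n + 1. Its coefficient of z^(n+1) is C_(n+1) T_a(0); it vanishes for a row
  because a T_a(0) = 0, and for a square matrix with det C(z) = c z^(n+1) by Cramer's rule.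
  Existence: peel the given first row down to the constant row v, complete that by V, and multiply
  the factors T_a(z) back. Uniqueness: two completions with the same first row have the same
  leading first row, hence the same factor T_a; peeling it off both lowers the degree.\<close>

lemma index_mult_mat_sum:
  "A \<in> carrier_mat r m \<Longrightarrow> B \<in> carrier_mat m n \<Longrightarrow> i < r \<Longrightarrow> j < n \<Longrightarrow>
   (A * B) $$ (i,j) = (\<Sum>l\<in>{0..<m}. A $$ (i,l) * B $$ (l,j))"
  by (simp add: scalar_prod_def)

lemma index_mult_mat_row_eq:
  assumes A: "A \<in> carrier_mat r m" and A': "A' \<in> carrier_mat r' m" and i: "i < r" "i' < r'"
    and eq: "\<And>l. l < m \<Longrightarrow> A $$ (i,l) = A' $$ (i',l)" and B: "B \<in> carrier_mat m n" and j: "j < n"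
  shows "(A * B) $$ (i,j) = (A' * B) $$ (i',j)"
  unfolding index_mult_mat_sum[OF A B i(1) j] index_mult_mat_sum[OF A' B i(2) j]
  by (rule sum.cong, auto simp: eq)

lemma det_one_minus_rank_one:
  fixes u w :: "nat \<Rightarrow> 'a :: idom"
  shows "det (mat m m (\<lambda>(i,j). (if i = j then 1 else 0) - u i * w j)) = 1 - (\<Sum>j\<in>{0..<m}. w j * u j)"
proof -
  define D where "D = mat m m (\<lambda>(i,j). (if i = j then 1 else 0) - u i * w j)"
  define U where "U = mat m 1 (\<lambda>(i,_). u i)"
  define W where "W = mat 1 m (\<lambda>(_,j). w j)"
  define c where "c = mat 1 1 (\<lambda>_. 1 - (\<Sum>j\<in>{0..<m}. w j * u j))"
  define I where "I = (1\<^sub>m m :: 'a mat)"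
  have D: "D \<in> carrier_mat m m" and U: "U \<in> carrier_mat m 1" and W: "W \<in> carrier_mat 1 m"
    and c: "c \<in> carrier_mat 1 1" and I: "I \<in> carrier_mat m m"
    by (auto simp: D_def U_def W_def c_def I_def)
  have z1: "(0\<^sub>m m 1 :: 'a mat) \<in> carrier_mat m 1" and z2: "(0\<^sub>m 1 m :: 'a mat) \<in> carrier_mat 1 m"
    and o1: "(1\<^sub>m 1 :: 'a mat) \<in> carrier_mat 1 1" by auto
  have WU: "W * U + c = 1\<^sub>m 1"
    by (rule eq_matI, auto simp: W_def U_def c_def scalar_prod_def)
  have DUW: "D * I + U * W = I"
    by (rule eq_matI, auto simp: D_def U_def W_def I_def scalar_prod_def)
  \<comment> \<open>both factorisations below compute the bordered matrix with blocks I, U, W, 1\<close>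
  define L1 where "L1 = four_block_mat I (0\<^sub>m m 1) W (1\<^sub>m 1)"
  define R1 where "R1 = four_block_mat I U (0\<^sub>m 1 m) c"
  define L2 where "L2 = four_block_mat D U (0\<^sub>m 1 m) (1\<^sub>m 1)"
  have prod1: "L1 * R1 = four_block_mat I U W (1\<^sub>m 1)"
    unfolding L1_def R1_def
    by (subst mult_four_block_mat[OF I z1 W o1 I U z2 c], insert I U W c WU, simp add: I_def)
  have prod2: "L2 * L1 = four_block_mat I U W (1\<^sub>m 1)"
    unfolding L2_def L1_def
    by (subst mult_four_block_mat[OF D U z2 o1 I z1 W o1], insert I U W D DUW, simp add: I_def)
  have carr: "L1 \<in> carrier_mat (m+1) (m+1)" "R1 \<in> carrier_mat (m+1) (m+1)" "L2 \<in> carrier_mat (m+1) (m+1)"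
    unfolding L1_def R1_def L2_def using I D c by auto
  have dL1: "det L1 = 1" unfolding L1_def
    by (subst det_four_block_mat_upper_right_zero[OF I refl W o1], simp add: I_def)
  have dR1: "det R1 = 1 - (\<Sum>j\<in>{0..<m}. w j * u j)" unfolding R1_def
    by (subst det_four_block_mat_lower_left_zero[OF I U refl c], simp add: I_def det_single[OF c], simp add: c_def)
  have dL2: "det L2 = det D" unfolding L2_def
    by (subst det_four_block_mat_lower_left_zero[OF D U refl o1], simp)
  have "det D = det (L2 * L1)" using det_mult[OF carr(3) carr(1)] dL1 dL2 by simp
  also have "\<dots> = det (L1 * R1)" using prod1 prod2 by simp
  also have "\<dots> = 1 - (\<Sum>j\<in>{0..<m}. w j * u j)" using det_mult[OF carr(1) carr(2)] dL1 dR1 by simp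
  finally show ?thesis unfolding D_def .
qed

lemma isCont_det_mat:
  fixes f :: "'a::t2_space \<Rightarrow> nat \<Rightarrow> nat \<Rightarrow> 'b::real_normed_field"
  assumes "\<And>i j. i < n \<Longrightarrow> j < n \<Longrightarrow> isCont (\<lambda>z. f z i j) z0"
  shows "isCont (\<lambda>z. det (mat n n (\<lambda>(i,j). f z i j))) z0"
proof -
  have eq: "det (mat n n (\<lambda>(i,j). f z i j)) = (\<Sum>p\<in>{p. p permutes {0..<n}}. signof p * (\<Prod>i=0..<n. f z i (p i)))" for z
    unfolding det_def'[OF mat_carrier]
    by (rule sum.cong, simp, rule arg_cong[where f = "\<lambda>x. _ * x"], rule prod.cong, simp,
        auto simp: permutes_in_image)
  show ?thesis unfolding eq
    by (intro continuous_intros assms, auto simp: permutes_in_image)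
qed

lemma isCont_eq_at:
  fixes f g :: "'a::{perfect_space,t2_space} \<Rightarrow> 'b::t2_space"
  assumes f: "isCont f a" and g: "isCont g a" and eq: "\<And>z. z \<noteq> a \<Longrightarrow> f z = g z"
  shows "f a = g a"
proof -
  have "\<forall>\<^sub>F z in at a. f z = g z" using eq by (auto simp: eventually_at_filter)
  then have "(g \<longlongrightarrow> f a) (at a)" using f by (simp add: isCont_def Lim_transform_eventually)
  with g show ?thesis by (simp add: isCont_def tendsto_unique[OF at_neq_bot])
qed

lemma sum_mult_zero_power: "(\<Sum>k\<le>M. c k * 0 ^ k) = (c 0 :: 'a::semiring_1)"
proof -
  have "(\<Sum>k\<le>M. c k * 0 ^ k) = (\<Sum>k\<le>M. if k = 0 then c k else 0)"
    by (rule sum.cong, auto simp: power_0_left)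
  then show ?thesis by (simp add: sum.delta)
qed

lemma sum_mult_zero_power_diff: "(\<Sum>k\<le>M. c k * 0 ^ (M - k)) = (c M :: 'a::semiring_1)"
proof -
  have "(\<Sum>k\<le>M. c k * 0 ^ (M - k)) = (\<Sum>k\<le>M. if k = M then c k else 0)"
    by (rule sum.cong, auto simp: power_0_left)
  then show ?thesis by (simp add: sum.delta)
qed

lemma power_mult_inverse_power:
  fixes z :: "'a::field" assumes "z \<noteq> 0" "k \<le> M"
  shows "z ^ M * inverse z ^ k = z ^ (M - k)"
proof -
  have "z ^ M = z ^ (M - k) * z ^ k" using assms by (simp add: power_add[symmetric])
  then show ?thesis using assms by (simp add: power_inverse field_simps)
qed

lemma sum_Suc_mult_power:
  fixes p :: "nat \<Rightarrow> 'a::field"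
  assumes p0: "p 0 = 0" and pM: "p (Suc M) = 0" and z: "z \<noteq> 0"
  shows "(\<Sum>k\<le>M. p (Suc k) * z ^ k) = inverse z * (\<Sum>k\<le>M. p k * z ^ k)"
proof -
  have "(\<Sum>k\<le>M. p k * z ^ k) = (\<Sum>k\<le>Suc M. p k * z ^ k)" using pM by simp
  also have "\<dots> = z * (\<Sum>k\<le>M. p (Suc k) * z ^ k)"
    unfolding sum.atMost_Suc_shift sum_distrib_left using p0 by (simp add: mult_ac)
  finally show ?thesis using z by simp
qed

lemma conj_transpose_mult:
  assumes "A \<in> carrier_mat a b" "B \<in> carrier_mat b c"
  shows "conj_transpose (A * B) = conj_transpose B * conj_transpose A"
  using assms by (intro eq_matI, auto simp: scalar_prod_def conj_transpose_def intro!: sum.cong)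

text \<open>A row vector a is a function of which only a 0, \<dots>, a (m - 1) are used.\<close>

definition sqnorm :: "nat \<Rightarrow> (nat \<Rightarrow> complex) \<Rightarrow> complex" where
  "sqnorm m a = (\<Sum>j\<in>{0..<m}. a j * cnj (a j))"

definition proj_mat :: "nat \<Rightarrow> (nat \<Rightarrow> complex) \<Rightarrow> complex mat" where
  "proj_mat m a = mat m m (\<lambda>(i,j). cnj (a i) * a j / sqnorm m a)"

definition elem_mat :: "nat \<Rightarrow> (nat \<Rightarrow> complex) \<Rightarrow> complex \<Rightarrow> complex mat" where
  "elem_mat m a z = mat m m (\<lambda>(i,j). (if i = j then 1 else 0) + (z - 1) * (cnj (a i) * a j / sqnorm m a))"

lemma proj_mat_carrier[simp]: "proj_mat m a \<in> carrier_mat m m"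
  and proj_mat_dims[simp]: "dim_row (proj_mat m a) = m" "dim_col (proj_mat m a) = m"
  by (simp_all add: proj_mat_def)

lemma elem_mat_carrier[simp]: "elem_mat m a z \<in> carrier_mat m m"
  and elem_mat_dims[simp]: "dim_row (elem_mat m a z) = m" "dim_col (elem_mat m a z) = m"
  by (simp_all add: elem_mat_def)

lemma sqnorm_nonzero:
  assumes "j < m" "a j \<noteq> 0" shows "sqnorm m a \<noteq> 0"
proof -
  have "sqnorm m a = of_real (\<Sum>j\<in>{0..<m}. (cmod (a j))\<^sup>2)"
    unfolding sqnorm_def of_real_sum by (rule sum.cong, simp, simp only: complex_norm_square)
  moreover have "(\<Sum>j\<in>{0..<m}. (cmod (a j))\<^sup>2) > 0"
    using assms by (intro sum_pos2[of _ j], auto)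
  ultimately show ?thesis by (metis of_real_eq_0_iff less_irrefl)
qed

lemma sum_proj_entries:
  assumes s: "sqnorm m a \<noteq> 0"
  shows "(\<Sum>l\<in>{0..<m}. cnj (a i) * a l / sqnorm m a * (cnj (a l) * a j / sqnorm m a))
    = cnj (a i) * a j / sqnorm m a"
proof -
  have "(\<Sum>l\<in>{0..<m}. cnj (a i) * a l / sqnorm m a * (cnj (a l) * a j / sqnorm m a))
      = (cnj (a i) * a j / (sqnorm m a * sqnorm m a)) * (\<Sum>l\<in>{0..<m}. a l * cnj (a l))"
    unfolding sum_distrib_left by (rule sum.cong, auto)
  also have "\<dots> = cnj (a i) * a j / sqnorm m a" using s by (simp add: sqnorm_def[symmetric])
  finally show ?thesis .
qed

lemma proj_mat_idem: "sqnorm m a \<noteq> 0 \<Longrightarrow> proj_mat m a * proj_mat m a = proj_mat m a"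
  by (rule eq_matI, insert sum_proj_entries, auto simp: proj_mat_def scalar_prod_def)

lemma elem_mat_mult:
  assumes s: "sqnorm m a \<noteq> 0"
  shows "elem_mat m a z * elem_mat m a w = elem_mat m a (z * w)"
proof (rule eq_matI)
  fix i j assume "i < dim_row (elem_mat m a (z * w))" and "j < dim_col (elem_mat m a (z * w))"
  then have i: "i < m" and j: "j < m" by auto
  define p where "p = (\<lambda>i l. cnj (a i) * a l / sqnorm m a)"
  have pp: "(\<Sum>l\<in>{0..<m}. (z - 1) * (w - 1) * (p i l * p l j)) = (z - 1) * (w - 1) * p i j"
    unfolding sum_distrib_left[symmetric] p_def sum_proj_entries[OF s] ..
  have "(elem_mat m a z * elem_mat m a w) $$ (i,j)
      = (\<Sum>l\<in>{0..<m}. ((if i = l then 1 else 0) + (z - 1) * p i l) * ((if l = j then 1 else 0) + (w - 1) * p l j))"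
    using i j by (simp add: elem_mat_def scalar_prod_def p_def)
  also have "\<dots> = (\<Sum>l\<in>{0..<m}. (if l = i then ((if l = j then 1 else 0) + (w - 1) * p l j) else 0)
      + (if l = j then (z - 1) * p i l else 0) + (z - 1) * (w - 1) * (p i l * p l j))"
    by (rule sum.cong, auto simp: algebra_simps)
  also have "\<dots> = ((if i = j then 1 else 0) + (w - 1) * p i j) + (z - 1) * p i j + (z - 1) * (w - 1) * p i j"
    using i j unfolding sum.distrib pp by simp
  also have "\<dots> = elem_mat m a (z * w) $$ (i,j)"
    using i j by (simp add: elem_mat_def p_def add_divide_distrib[symmetric] algebra_simps)
  finally show "(elem_mat m a z * elem_mat m a w) $$ (i,j) = elem_mat m a (z * w) $$ (i,j)" .
qed auto

lemma elem_mat_one[simp]: "elem_mat m a 1 = 1\<^sub>m m"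
  by (rule eq_matI, auto simp: elem_mat_def)

lemma conj_transpose_elem_mat: "conj_transpose (elem_mat m a z) = elem_mat m a (cnj z)"
  by (intro eq_matI, auto simp: elem_mat_def conj_transpose_def sqnorm_def mult.commute)

lemma det_elem_mat:
  assumes s: "sqnorm m a \<noteq> 0"
  shows "det (elem_mat m a z) = z"
proof -
  have "elem_mat m a z = mat m m (\<lambda>(i,j). (if i = j then 1 else 0) - ((1 - z) * cnj (a i) / sqnorm m a) * a j)"
    by (rule eq_matI, auto simp: elem_mat_def add_divide_distrib[symmetric] algebra_simps)
  then have "det (elem_mat m a z) = 1 - (\<Sum>j\<in>{0..<m}. a j * ((1 - z) * cnj (a j) / sqnorm m a))"
    by (simp only: det_one_minus_rank_one)
  also have "(\<Sum>j\<in>{0..<m}. a j * ((1 - z) * cnj (a j) / sqnorm m a)) = ((1 - z) / sqnorm m a) * sqnorm m a"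
    unfolding sqnorm_def sum_distrib_left by (rule sum.cong, auto)
  finally show ?thesis using s by simp
qed

lemma index_elem_mat:
  "l < m \<Longrightarrow> j < m \<Longrightarrow> elem_mat m a w $$ (l,j) = elem_mat m a 0 $$ (l,j) + w * proj_mat m a $$ (l,j)"
  by (simp add: elem_mat_def proj_mat_def add_divide_distrib[symmetric] algebra_simps)

lemma elem_mat_0_plus_proj: "elem_mat m a 0 + proj_mat m a = 1\<^sub>m m"
  by (rule eq_matI, auto simp: elem_mat_def proj_mat_def)

lemma elem_mat_0_idem: "sqnorm m a \<noteq> 0 \<Longrightarrow> elem_mat m a 0 * elem_mat m a 0 = elem_mat m a 0"
  using elem_mat_mult[of m a 0 0] by simp

lemma elem_mat_0_eq: "elem_mat m a 0 = 1\<^sub>m m - proj_mat m a"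
  by (rule eq_matI, auto simp: elem_mat_def proj_mat_def)

lemma elem_mat_0_mult_proj: "sqnorm m a \<noteq> 0 \<Longrightarrow> elem_mat m a 0 * proj_mat m a = 0\<^sub>m m m"
  unfolding elem_mat_0_eq
  by (subst minus_mult_distrib_mat[OF one_carrier_mat proj_mat_carrier proj_mat_carrier], auto simp: proj_mat_idem)

lemma proj_mult_elem_mat_0: "sqnorm m a \<noteq> 0 \<Longrightarrow> proj_mat m a * elem_mat m a 0 = 0\<^sub>m m m"
  unfolding elem_mat_0_eq
  by (subst mult_minus_distrib_mat[OF proj_mat_carrier one_carrier_mat proj_mat_carrier], auto simp: proj_mat_idem)

lemma row_mult_elem_mat_0:
  assumes s: "sqnorm m a \<noteq> 0" and X: "X \<in> carrier_mat r m" and i: "i < r"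
    and row: "\<And>l. l < m \<Longrightarrow> X $$ (i,l) = a l" and j: "j < m"
  shows "(X * elem_mat m a 0) $$ (i,j) = 0"
proof -
  have "(X * elem_mat m a 0) $$ (i,j)
      = (\<Sum>l\<in>{0..<m}. (if l = j then a l else 0)) - (a j / sqnorm m a) * (\<Sum>l\<in>{0..<m}. a l * cnj (a l))"
    unfolding index_mult_mat_sum[OF X elem_mat_carrier i j] sum_distrib_left sum_subtractf[symmetric]
    by (rule sum.cong, auto simp: row elem_mat_def j field_simps)
  then show ?thesis using s j by (simp add: sqnorm_def[symmetric])
qed

text \<open>Rectangular r \<times> m versions of mpoly_eval and mpoly_tilde_eval; the given first row is
  the case r = 1.\<close>

definition pm_eval :: "nat \<Rightarrow> nat \<Rightarrow> nat \<Rightarrow> (nat \<Rightarrow> complex mat) \<Rightarrow> complex \<Rightarrow> complex mat" where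
  "pm_eval r m M C z = mat r m (\<lambda>(i,j). \<Sum>k\<le>M. C k $$ (i,j) * z ^ k)"

definition pm_tilde :: "nat \<Rightarrow> nat \<Rightarrow> nat \<Rightarrow> (nat \<Rightarrow> complex mat) \<Rightarrow> complex \<Rightarrow> complex mat" where
  "pm_tilde r m M C z = mat m r (\<lambda>(i,j). \<Sum>k\<le>M. cnj (C k $$ (j,i)) * inverse z ^ k)"

lemma pm_eval_carrier[simp]: "pm_eval r m M C z \<in> carrier_mat r m"
  and pm_eval_dims[simp]: "dim_row (pm_eval r m M C z) = r" "dim_col (pm_eval r m M C z) = m"
  by (simp_all add: pm_eval_def)

lemma pm_tilde_carrier[simp]: "pm_tilde r m M C z \<in> carrier_mat m r"
  and pm_tilde_dims[simp]: "dim_row (pm_tilde r m M C z) = m" "dim_col (pm_tilde r m M C z) = r"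
  by (simp_all add: pm_tilde_def)

lemma index_pm_eval:
  "i < r \<Longrightarrow> j < m \<Longrightarrow> pm_eval r m M C z $$ (i,j) = (\<Sum>k\<le>M. C k $$ (i,j) * z ^ k)"
  by (simp add: pm_eval_def)

lemma index_pm_tilde:
  "i < m \<Longrightarrow> j < r \<Longrightarrow> pm_tilde r m M C z $$ (i,j) = (\<Sum>k\<le>M. cnj (C k $$ (j,i)) * inverse z ^ k)"
  by (simp add: pm_tilde_def)

lemma pm_tilde_eq_conj_transpose: "pm_tilde r m M C z = conj_transpose (pm_eval r m M C (cnj (inverse z)))"
  by (intro eq_matI, auto simp: pm_tilde_def pm_eval_def conj_transpose_def)

lemma power_mult_index_pm_tilde:
  assumes z: "z \<noteq> 0" and i: "i < m" and j: "j < r"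
  shows "z ^ M * pm_tilde r m M C z $$ (i,j) = (\<Sum>k\<le>M. cnj (C k $$ (j,i)) * z ^ (M - k))"
  unfolding index_pm_tilde[OF i j] sum_distrib_left
  by (rule sum.cong, simp, simp add: power_mult_inverse_power[OF z, symmetric] mult_ac)

lemma pm_eval_deg0: "C 0 \<in> carrier_mat r m \<Longrightarrow> pm_eval r m 0 C z = C 0"
  by (rule eq_matI, auto simp: pm_eval_def)

lemma pm_tilde_deg0: "C 0 \<in> carrier_mat r m \<Longrightarrow> pm_tilde r m 0 C z = conj_transpose (C 0)"
  by (rule eq_matI, auto simp: pm_tilde_def conj_transpose_def)

lemma pm_eval_tilde_Suc:
  assumes "C (Suc n) = 0\<^sub>m r m"
  shows "pm_eval r m (Suc n) C z = pm_eval r m n C z" "pm_tilde r m (Suc n) C z = pm_tilde r m n C z"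
  using assms by (auto intro!: eq_matI simp: pm_eval_def pm_tilde_def)

lemma isCont_det_pm_eval: "isCont (\<lambda>z. det (pm_eval m m n C z)) z0"
  unfolding pm_eval_def by (rule isCont_det_mat, intro continuous_intros)

lemma pm_eval_mult_elem_mat:
  assumes C: "\<And>k. C k \<in> carrier_mat r m" and i: "i < r" and j: "j < m"
  shows "(pm_eval r m M C z * elem_mat m a w) $$ (i,j) =
     (\<Sum>k\<le>M. (C k * elem_mat m a 0) $$ (i,j) * z ^ k) + w * (\<Sum>k\<le>M. (C k * proj_mat m a) $$ (i,j) * z ^ k)"
proof -
  have "(pm_eval r m M C z * elem_mat m a w) $$ (i,j)
      = (\<Sum>l\<in>{0..<m}. (\<Sum>k\<le>M. C k $$ (i,l) * z ^ k) * (elem_mat m a 0 $$ (l,j) + w * proj_mat m a $$ (l,j)))"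
    unfolding index_mult_mat_sum[OF pm_eval_carrier elem_mat_carrier i j]
    by (rule sum.cong[OF refl]) (simp add: index_pm_eval i index_elem_mat[of _ m j a w] j)
  also have "\<dots> = (\<Sum>l\<in>{0..<m}. \<Sum>k\<le>M. C k $$ (i,l) * elem_mat m a 0 $$ (l,j) * z ^ k
          + w * (C k $$ (i,l) * proj_mat m a $$ (l,j) * z ^ k))"
    by (rule sum.cong[OF refl], subst sum_distrib_right, rule sum.cong[OF refl], simp add: algebra_simps)
  also have "\<dots> = (\<Sum>k\<le>M. \<Sum>l\<in>{0..<m}. C k $$ (i,l) * elem_mat m a 0 $$ (l,j) * z ^ k)
      + w * (\<Sum>k\<le>M. \<Sum>l\<in>{0..<m}. C k $$ (i,l) * proj_mat m a $$ (l,j) * z ^ k)"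
    by (subst sum.swap, simp only: sum.distrib sum_distrib_left)
  finally show ?thesis
    by (simp only: index_mult_mat_sum[OF C elem_mat_carrier i j] index_mult_mat_sum[OF C proj_mat_carrier i j]
        sum_distrib_right)
qed

text \<open>The coefficients of C(z) elem_mat m a (1/z) and of B(z) elem_mat m a z,
  since elem_mat m a z = elem_mat m a 0 + z proj_mat m a.\<close>

definition peel :: "nat \<Rightarrow> (nat \<Rightarrow> complex) \<Rightarrow> (nat \<Rightarrow> complex mat) \<Rightarrow> nat \<Rightarrow> complex mat" where
  "peel m a C k = C k * elem_mat m a 0 + C (Suc k) * proj_mat m a"

definition unpeel :: "nat \<Rightarrow> (nat \<Rightarrow> complex) \<Rightarrow> (nat \<Rightarrow> complex mat) \<Rightarrow> nat \<Rightarrow> complex mat" where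
  "unpeel m a B k =
     (if k = 0 then B 0 * elem_mat m a 0 else B k * elem_mat m a 0 + B (k - 1) * proj_mat m a)"

lemma peel_carrier:
  assumes "\<And>k. C k \<in> carrier_mat r m" shows "peel m a C k \<in> carrier_mat r m"
  using mult_carrier_mat[OF assms elem_mat_carrier] mult_carrier_mat[OF assms proj_mat_carrier]
  unfolding peel_def by (blast intro: add_carrier_mat)

lemma unpeel_carrier:
  assumes "\<And>k. B k \<in> carrier_mat r m" shows "unpeel m a B k \<in> carrier_mat r m"
  using mult_carrier_mat[OF assms elem_mat_carrier] mult_carrier_mat[OF assms proj_mat_carrier]
  unfolding unpeel_def by auto

lemma index_peel:
  assumes C: "\<And>k. C k \<in> carrier_mat r m" and i: "i < r" and j: "j < m"
  shows "peel m a C k $$ (i,j) = (C k * elem_mat m a 0) $$ (i,j) + (C (Suc k) * proj_mat m a) $$ (i,j)"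
  unfolding peel_def using i j by (simp add: carrier_matD[OF C])

lemma index_unpeel:
  assumes B: "\<And>k. B k \<in> carrier_mat r m" and i: "i < r" and j: "j < m"
  shows "unpeel m a B k $$ (i,j)
    = (B k * elem_mat m a 0) $$ (i,j) + (if k = 0 then 0 else (B (k - 1) * proj_mat m a) $$ (i,j))"
  unfolding unpeel_def using i j by (simp add: carrier_matD[OF B])

lemma peel_row_eq:
  assumes C: "\<And>k. C k \<in> carrier_mat r m" and C': "\<And>k. C' k \<in> carrier_mat r' m"
    and i: "i < r" "i' < r'" and eq: "\<And>k l. l < m \<Longrightarrow> C k $$ (i,l) = C' k $$ (i',l)" and j: "j < m"
  shows "peel m a C k $$ (i,j) = peel m a C' k $$ (i',j)"
  unfolding index_peel[OF C i(1) j] index_peel[OF C' i(2) j]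
  using index_mult_mat_row_eq[OF C C' i eq elem_mat_carrier j]
    index_mult_mat_row_eq[OF C C' i eq proj_mat_carrier j] by simp

lemma unpeel_row_eq:
  assumes B: "\<And>k. B k \<in> carrier_mat r m" and B': "\<And>k. B' k \<in> carrier_mat r' m"
    and i: "i < r" "i' < r'" and eq: "\<And>k l. l < m \<Longrightarrow> B k $$ (i,l) = B' k $$ (i',l)" and j: "j < m"
  shows "unpeel m a B k $$ (i,j) = unpeel m a B' k $$ (i',j)"
  unfolding index_unpeel[OF B i(1) j] index_unpeel[OF B' i(2) j]
  using index_mult_mat_row_eq[OF B B' i eq elem_mat_carrier j]
    index_mult_mat_row_eq[OF B B' i eq proj_mat_carrier j] by simp

lemma unpeel_peel:
  assumes s: "sqnorm m a \<noteq> 0" and C: "\<And>k. C k \<in> carrier_mat r m"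
    and C0: "C 0 * proj_mat m a = 0\<^sub>m r m"
  shows "unpeel m a (peel m a C) k = C k"
proof -
  let ?T = "elem_mat m a 0" and ?P = "proj_mat m a"
  have CT: "C k * ?T \<in> carrier_mat r m" and CP: "C k * ?P \<in> carrier_mat r m" for k
    using mult_carrier_mat[OF C elem_mat_carrier] mult_carrier_mat[OF C proj_mat_carrier] by auto
  have split: "C k * ?T + C k * ?P = C k" for k
    using C[of k] by (simp add: mult_add_distrib_mat[OF C elem_mat_carrier proj_mat_carrier, symmetric]
        elem_mat_0_plus_proj)
  have peel_T: "peel m a C k * ?T = C k * ?T" for k
  proof -
    have "peel m a C k * ?T = C k * (?T * ?T) + C (Suc k) * (?P * ?T)"
      unfolding peel_def add_mult_distrib_mat[OF CT CP elem_mat_carrier]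
      using C by (simp add: assoc_mult_mat[of _ r m _ m _ m])
    then show ?thesis
      by (simp add: elem_mat_0_idem[OF s] proj_mult_elem_mat_0[OF s] right_mult_zero_mat[OF C]
          right_add_zero_mat[OF CT])
  qed
  have peel_P: "peel m a C k * ?P = C (Suc k) * ?P" for k
  proof -
    have "peel m a C k * ?P = C k * (?T * ?P) + C (Suc k) * (?P * ?P)"
      unfolding peel_def add_mult_distrib_mat[OF CT CP proj_mat_carrier]
      using C by (simp add: assoc_mult_mat[of _ r m _ m _ m])
    then show ?thesis
      by (simp add: elem_mat_0_mult_proj[OF s] proj_mat_idem[OF s] right_mult_zero_mat[OF C]
          left_add_zero_mat[OF CP])
  qed
  show ?thesis
  proof (cases k)
    case 0
    then show ?thesis using split[of 0] C0 C[of 0] by (simp add: unpeel_def peel_T)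
  next
    case (Suc k')
    then show ?thesis using split[of k] by (simp add: unpeel_def peel_T peel_P)
  qed
qed

lemma pm_eval_peel:
  assumes C: "\<And>k. C k \<in> carrier_mat r m" and Z: "C (Suc M) = 0\<^sub>m r m"
    and C0: "C 0 * proj_mat m a = 0\<^sub>m r m" and z: "z \<noteq> 0"
  shows "pm_eval r m M (peel m a C) z = pm_eval r m M C z * elem_mat m a (inverse z)"
proof (rule eq_matI)
  fix i j assume "i < dim_row (pm_eval r m M C z * elem_mat m a (inverse z))"
    and "j < dim_col (pm_eval r m M C z * elem_mat m a (inverse z))"
  then have i: "i < r" and j: "j < m" by auto
  define p where "p k = (C k * proj_mat m a) $$ (i,j)" for k
  have p0: "p 0 = 0" and pM: "p (Suc M) = 0" using C0 Z i j by (simp_all add: p_def)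
  have "pm_eval r m M (peel m a C) z $$ (i,j)
      = (\<Sum>k\<le>M. (C k * elem_mat m a 0) $$ (i,j) * z ^ k) + (\<Sum>k\<le>M. p (Suc k) * z ^ k)"
    by (simp add: index_pm_eval i j index_peel[OF C i j] p_def sum.distrib distrib_right)
  also have "\<dots> = (\<Sum>k\<le>M. (C k * elem_mat m a 0) $$ (i,j) * z ^ k) + inverse z * (\<Sum>k\<le>M. p k * z ^ k)"
    by (simp only: sum_Suc_mult_power[OF p0 pM z])
  finally show "pm_eval r m M (peel m a C) z $$ (i,j) = (pm_eval r m M C z * elem_mat m a (inverse z)) $$ (i,j)"
    by (simp only: pm_eval_mult_elem_mat[OF C i j] p_def)
qed auto

lemma pm_eval_unpeel:
  assumes B: "\<And>k. B k \<in> carrier_mat r m" and Z: "B (Suc M) = 0\<^sub>m r m"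
  shows "pm_eval r m (Suc M) (unpeel m a B) z = pm_eval r m M B z * elem_mat m a z"
proof (rule eq_matI)
  fix i j assume "i < dim_row (pm_eval r m M B z * elem_mat m a z)"
    and "j < dim_col (pm_eval r m M B z * elem_mat m a z)"
  then have i: "i < r" and j: "j < m" by auto
  define q where "q k = (B k * elem_mat m a 0) $$ (i,j)" for k
  define p where "p k = (B k * proj_mat m a) $$ (i,j)" for k
  have qM: "q (Suc M) = 0" using Z i j by (simp add: q_def)
  have "pm_eval r m (Suc M) (unpeel m a B) z $$ (i,j)
      = (\<Sum>k\<le>Suc M. (if k = 0 then q 0 else q k + p (k - 1)) * z ^ k)"
    unfolding index_pm_eval[OF i j] by (rule sum.cong, auto simp: index_unpeel[OF B i j] p_def q_def)
  also have "\<dots> = (\<Sum>k\<le>Suc M. q k * z ^ k) + z * (\<Sum>k\<le>M. p k * z ^ k)"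
    unfolding sum.atMost_Suc_shift by (simp add: sum.distrib sum_distrib_left algebra_simps)
  also have "(\<Sum>k\<le>Suc M. q k * z ^ k) = (\<Sum>k\<le>M. q k * z ^ k)" using qM by simp
  finally show "pm_eval r m (Suc M) (unpeel m a B) z $$ (i,j) = (pm_eval r m M B z * elem_mat m a z) $$ (i,j)"
    by (simp only: pm_eval_mult_elem_mat[OF B i j] p_def q_def)
qed auto

lemma pm_tilde_peel:
  assumes C: "\<And>k. C k \<in> carrier_mat r m" and Z: "C (Suc M) = 0\<^sub>m r m"
    and C0: "C 0 * proj_mat m a = 0\<^sub>m r m" and z: "z \<noteq> 0"
  shows "pm_tilde r m M (peel m a C) z = elem_mat m a z * pm_tilde r m M C z"
proof -
  let ?w = "cnj (inverse z)"
  have "pm_tilde r m M (peel m a C) z = conj_transpose (pm_eval r m M C ?w * elem_mat m a (inverse ?w))"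
    using z by (simp add: pm_tilde_eq_conj_transpose pm_eval_peel[where C=C and r=r and m=m and M=M, OF C Z C0])
  also have "\<dots> = elem_mat m a z * pm_tilde r m M C z"
    by (simp add: conj_transpose_mult[OF pm_eval_carrier elem_mat_carrier] conj_transpose_elem_mat
        pm_tilde_eq_conj_transpose complex_cnj_inverse)
  finally show ?thesis .
qed

lemma pm_tilde_unpeel:
  assumes B: "\<And>k. B k \<in> carrier_mat r m" and Z: "B (Suc M) = 0\<^sub>m r m"
  shows "pm_tilde r m (Suc M) (unpeel m a B) z = elem_mat m a (inverse z) * pm_tilde r m M B z"
  by (simp add: pm_tilde_eq_conj_transpose pm_eval_unpeel[where B=B and r=r and m=m and M=M, OF B Z] conj_transpose_elem_mat
      conj_transpose_mult[OF pm_eval_carrier elem_mat_carrier])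

lemma mult_elem_mat_cancel:
  assumes s: "sqnorm m a \<noteq> 0" and w: "w \<noteq> 0" and E: "E \<in> carrier_mat r m" and G: "G \<in> carrier_mat m r"
  shows "(E * elem_mat m a w) * (elem_mat m a (inverse w) * G) = E * G"
proof -
  have "(E * elem_mat m a w) * (elem_mat m a (inverse w) * G) = E * ((elem_mat m a w * elem_mat m a (inverse w)) * G)"
    using assoc_mult_mat[OF E elem_mat_carrier mult_carrier_mat[OF elem_mat_carrier G]]
      assoc_mult_mat[OF elem_mat_carrier elem_mat_carrier G] by simp
  then show ?thesis using w G by (simp add: elem_mat_mult[OF s])
qed

definition paraunitary :: "nat \<Rightarrow> nat \<Rightarrow> nat \<Rightarrow> (nat \<Rightarrow> complex mat) \<Rightarrow> bool" where
  "paraunitary r m M C \<longleftrightarrow> (\<forall>k. C k \<in> carrier_mat r m) \<and> (\<forall>k>M. C k = 0\<^sub>m r m) \<and>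
     (\<forall>z. z \<noteq> 0 \<longrightarrow> pm_eval r m M C z * pm_tilde r m M C z = 1\<^sub>m r)"

definition det_monomial :: "nat \<Rightarrow> nat \<Rightarrow> (nat \<Rightarrow> complex mat) \<Rightarrow> bool" where
  "det_monomial m M C \<longleftrightarrow> (\<exists>c. \<forall>z. det (pm_eval m m M C z) = c * z ^ M)"

text \<open>Padding with zeros makes the function depend on the i-th row of A only.\<close>

definition row_fun :: "nat \<Rightarrow> complex mat \<Rightarrow> nat \<Rightarrow> nat \<Rightarrow> complex" where
  "row_fun m A i j = (if j < m then A $$ (i,j) else 0)"

lemma paraunitaryD:
  assumes "paraunitary r m M C"
  shows "C k \<in> carrier_mat r m" "M < k \<Longrightarrow> C k = 0\<^sub>m r m"
    "z \<noteq> 0 \<Longrightarrow> pm_eval r m M C z * pm_tilde r m M C z = 1\<^sub>m r"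
  using assms unfolding paraunitary_def by auto

text \<open>The coefficient of z^(-M) in C(z) C~(z) = I.\<close>

lemma paraunitary_coeff_orth:
  assumes P: "paraunitary r m M C" and M: "M \<ge> 1" and i: "i < r" and i': "i' < r"
  shows "(\<Sum>l\<in>{0..<m}. C 0 $$ (i,l) * cnj (C M $$ (i',l))) = 0"
proof -
  define f where "f z = (\<Sum>l\<in>{0..<m}. (\<Sum>k\<le>M. C k $$ (i,l) * z ^ k) * (\<Sum>k\<le>M. cnj (C k $$ (i',l)) * z ^ (M - k)))"
    for z :: complex
  define g where "g z = z ^ M * (if i = i' then 1 else 0)" for z :: complex
  have fg: "f z = g z" if z: "z \<noteq> 0" for z
  proof -
    have "g z = z ^ M * (pm_eval r m M C z * pm_tilde r m M C z) $$ (i,i')"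
      using paraunitaryD(3)[OF P z] i i' by (simp add: g_def)
    also have "\<dots> = (\<Sum>l\<in>{0..<m}. pm_eval r m M C z $$ (i,l) * (z ^ M * pm_tilde r m M C z $$ (l,i')))"
      by (simp add: index_mult_mat_sum[OF pm_eval_carrier pm_tilde_carrier i i'] sum_distrib_left mult_ac)
    also have "\<dots> = f z" unfolding f_def
      by (rule sum.cong, simp, simp add: power_mult_index_pm_tilde[OF z _ i'] index_pm_eval[OF i])
    finally show ?thesis by simp
  qed
  have "isCont f 0" unfolding f_def by (intro continuous_intros)
  moreover have "isCont g 0" unfolding g_def by (intro continuous_intros)
  ultimately have "f 0 = g 0" using fg by (rule isCont_eq_at)
  moreover have "f 0 = (\<Sum>l\<in>{0..<m}. C 0 $$ (i,l) * cnj (C M $$ (i',l)))"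
    unfolding f_def by (simp only: sum_mult_zero_power sum_mult_zero_power_diff)
  ultimately show ?thesis using M by (simp add: g_def)
qed

lemma lowest_coeff_mult_proj:
  assumes P: "paraunitary r m M C" and M: "M \<ge> 1" and i0: "i0 < r" and a: "a = row_fun m (C M) i0"
  shows "C 0 * proj_mat m a = 0\<^sub>m r m"
proof (rule eq_matI)
  fix i j assume "i < dim_row (0\<^sub>m r m :: complex mat)" "j < dim_col (0\<^sub>m r m :: complex mat)"
  then have i: "i < r" and j: "j < m" by auto
  have "(C 0 * proj_mat m a) $$ (i,j) = (a j / sqnorm m a) * (\<Sum>l\<in>{0..<m}. C 0 $$ (i,l) * cnj (C M $$ (i0,l)))"
    unfolding index_mult_mat_sum[OF paraunitaryD(1)[OF P] proj_mat_carrier i j] sum_distrib_left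
    by (rule sum.cong, auto simp: proj_mat_def a row_fun_def j)
  then show "(C 0 * proj_mat m a) $$ (i,j) = 0\<^sub>m r m $$ (i,j)"
    using paraunitary_coeff_orth[OF P M i i0] i j by simp
qed (use paraunitaryD(1)[OF P, of 0] in auto)

lemma paraunitary_peel:
  assumes P: "paraunitary r m M C" and s: "sqnorm m a \<noteq> 0" and C0: "C 0 * proj_mat m a = 0\<^sub>m r m"
  shows "paraunitary r m M (peel m a C)"
    and "z \<noteq> 0 \<Longrightarrow> pm_eval r m M (peel m a C) z = pm_eval r m M C z * elem_mat m a (inverse z)"
proof -
  note C = paraunitaryD(1)[OF P] and Z = paraunitaryD(2)[OF P, of "Suc M"]
  show eval: "pm_eval r m M (peel m a C) z = pm_eval r m M C z * elem_mat m a (inverse z)" if "z \<noteq> 0" for z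
    using pm_eval_peel[where C=C and r=r and m=m and M=M, OF C _ C0 that] Z by simp
  have "peel m a C k = 0\<^sub>m r m" if k: "M < k" for k
  proof -
    have "C k = 0\<^sub>m r m" "C (Suc k) = 0\<^sub>m r m" using k paraunitaryD(2)[OF P] by auto
    then show ?thesis by (simp add: peel_def)
  qed
  moreover have "pm_eval r m M (peel m a C) z * pm_tilde r m M (peel m a C) z = 1\<^sub>m r" if z: "z \<noteq> 0" for z
  proof -
    have iz: "inverse z \<noteq> 0" using z by simp
    have "pm_eval r m M (peel m a C) z * pm_tilde r m M (peel m a C) z
        = (pm_eval r m M C z * elem_mat m a (inverse z)) * (elem_mat m a (inverse (inverse z)) * pm_tilde r m M C z)"
      using pm_tilde_peel[where C=C and r=r and m=m and M=M, OF C _ C0 z] Z by (simp add: eval[OF z])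
    also have "\<dots> = pm_eval r m M C z * pm_tilde r m M C z"
      by (rule mult_elem_mat_cancel[OF s iz pm_eval_carrier pm_tilde_carrier])
    finally show ?thesis using paraunitaryD(3)[OF P z] by simp
  qed
  ultimately show "paraunitary r m M (peel m a C)"
    unfolding paraunitary_def using peel_carrier[OF C] by simp
qed

lemma paraunitary_lower_degree:
  assumes P: "paraunitary r m (Suc n) C" and top: "C (Suc n) = 0\<^sub>m r m"
  shows "paraunitary r m n C"
proof -
  have "C k = 0\<^sub>m r m" if "n < k" for k
    using that top paraunitaryD(2)[OF P, of k] by (cases "k = Suc n") auto
  then show ?thesis
    using P unfolding paraunitary_def by (simp add: pm_eval_tilde_Suc[where C=C and n=n, OF top])
qed

lemma paraunitary_unpeel:
  assumes P: "paraunitary r m n B" and s: "sqnorm m a \<noteq> 0"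
  shows "paraunitary r m (Suc n) (unpeel m a B)"
    and "pm_eval r m (Suc n) (unpeel m a B) z = pm_eval r m n B z * elem_mat m a z"
proof -
  note B = paraunitaryD(1)[OF P] and Z = paraunitaryD(2)[OF P]
  show eval: "pm_eval r m (Suc n) (unpeel m a B) z = pm_eval r m n B z * elem_mat m a z" for z
    using pm_eval_unpeel[where B=B and r=r and m=m and M=n, OF B Z] by simp
  have "unpeel m a B k = 0\<^sub>m r m" if k: "Suc n < k" for k
  proof -
    have "B k = 0\<^sub>m r m" "B (k - 1) = 0\<^sub>m r m" using k Z by auto
    then show ?thesis using k by (simp add: unpeel_def)
  qed
  moreover have "pm_eval r m (Suc n) (unpeel m a B) z * pm_tilde r m (Suc n) (unpeel m a B) z = 1\<^sub>m r"
    if z: "z \<noteq> 0" for z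
  proof -
    have "pm_eval r m (Suc n) (unpeel m a B) z * pm_tilde r m (Suc n) (unpeel m a B) z
        = (pm_eval r m n B z * elem_mat m a z) * (elem_mat m a (inverse z) * pm_tilde r m n B z)"
      by (simp only: eval pm_tilde_unpeel[where B=B and r=r and m=m and M=n, OF B Z])
    also have "\<dots> = pm_eval r m n B z * pm_tilde r m n B z"
      by (rule mult_elem_mat_cancel[OF s z pm_eval_carrier pm_tilde_carrier])
    finally show ?thesis using paraunitaryD(3)[OF P z] by simp
  qed
  ultimately show "paraunitary r m (Suc n) (unpeel m a B)"
    unfolding paraunitary_def using unpeel_carrier[OF B] by simp
qed

lemma replace_col_pm_eval:
  "i < m \<Longrightarrow> replace_col (pm_eval r m M C z) b i
    = mat r m (\<lambda>(p,q). if q = i then b $ p else (\<Sum>k\<le>M. C k $$ (p,q) * z ^ k))"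
  by (rule eq_matI, auto simp: replace_col_def pm_eval_def)

text \<open>By Cramer's rule z^M C~(z) = z adj(C(z)) / c, and its value at z = 0 is (C M)^*.\<close>

lemma paraunitary_top_coeff_zero:
  assumes P: "paraunitary m m M C" and M: "M \<ge> 1"
    and dt: "\<And>z. z \<noteq> 0 \<Longrightarrow> det (pm_eval m m M C z) = c * z ^ (M - 1)"
  shows "C M = 0\<^sub>m m m"
proof -
  have "det (pm_eval m m M C 1 * pm_tilde m m M C 1) = 1" using paraunitaryD(3)[OF P, of 1] by simp
  then have "det (pm_eval m m M C 1) * det (pm_tilde m m M C 1) = 1"
    by (simp add: det_mult[OF pm_eval_carrier pm_tilde_carrier])
  then have c: "c \<noteq> 0" using dt[of 1] by auto
  show ?thesis
  proof (rule eq_matI)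
    fix j i assume "j < dim_row (0\<^sub>m m m :: complex mat)" "i < dim_col (0\<^sub>m m m :: complex mat)"
    then have j: "j < m" and i: "i < m" by auto
    define f where "f z = z * det (replace_col (pm_eval m m M C z) (unit_vec m j) i)" for z
    define g where "g z = c * (\<Sum>k\<le>M. cnj (C k $$ (j,i)) * z ^ (M - k))" for z
    have fg: "f z = g z" if z: "z \<noteq> 0" for z
    proof -
      let ?E = "pm_eval m m M C z" and ?x = "col (pm_tilde m m M C z) j"
      have "?E *\<^sub>v ?x = col (?E * pm_tilde m m M C z) j"
        by (rule col_mult2[OF pm_eval_carrier pm_tilde_carrier j, symmetric])
      also have "\<dots> = unit_vec m j" using paraunitaryD(3)[OF P z] j by simp
      finally have Ex: "?E *\<^sub>v ?x = unit_vec m j" .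
      have "det (replace_col ?E (unit_vec m j) i) = ?x $ i * det ?E"
        using cramer_lemma_mat[OF pm_eval_carrier[of m m M C z] col_carrier_vec[OF j pm_tilde_carrier[of m m M C z]] i]
        unfolding Ex .
      then have "f z = c * ((z * z ^ (M - 1)) * pm_tilde m m M C z $$ (i,j))"
        using i j by (simp add: f_def dt[OF z] mult_ac)
      also have "z * z ^ (M - 1) = z ^ M" using M by (cases M) auto
      finally show ?thesis by (simp only: power_mult_index_pm_tilde[OF z i j] g_def)
    qed
    have "isCont f 0" unfolding f_def replace_col_pm_eval[OF i]
    proof (intro continuous_intros isCont_det_mat)
      fix p q show "isCont (\<lambda>z. if q = i then unit_vec m j $ p else (\<Sum>k\<le>M. C k $$ (p,q) * z ^ k)) 0"
        by (cases "q = i", simp_all)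
    qed
    moreover have "isCont g 0" unfolding g_def by (intro continuous_intros)
    ultimately have "f 0 = g 0" using fg by (rule isCont_eq_at)
    then have "c * cnj (C M $$ (j,i)) = 0" by (simp add: f_def g_def sum_mult_zero_power_diff)
    then show "C M $$ (j,i) = 0\<^sub>m m m $$ (j,i)" using c i j by simp
  qed (use paraunitaryD(1)[OF P, of M] in auto)
qed

lemma paraunitary_det_peel:
  assumes P: "paraunitary m m (Suc n) C" and dm: "det_monomial m (Suc n) C"
    and s: "sqnorm m a \<noteq> 0" and C0: "C 0 * proj_mat m a = 0\<^sub>m m m"
  shows "peel m a C (Suc n) = 0\<^sub>m m m" and "paraunitary m m n (peel m a C)"
    and "det_monomial m n (peel m a C)" and "pm_eval m m n (peel m a C) 1 = pm_eval m m (Suc n) C 1"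
proof -
  obtain c where dt: "\<And>z. det (pm_eval m m (Suc n) C z) = c * z ^ Suc n"
    using dm unfolding det_monomial_def by auto
  note P' = paraunitary_peel[OF P s C0]
  have det_peel: "det (pm_eval m m (Suc n) (peel m a C) z) = c * z ^ n" if z: "z \<noteq> 0" for z
    using z by (simp add: P'(2)[OF z] det_mult[OF pm_eval_carrier elem_mat_carrier] det_elem_mat[OF s] dt)
  show top: "peel m a C (Suc n) = 0\<^sub>m m m"
    using paraunitary_top_coeff_zero[of m "Suc n" "peel m a C" c] P'(1) det_peel by simp
  show "paraunitary m m n (peel m a C)" by (rule paraunitary_lower_degree[OF P'(1) top])
  note drop = pm_eval_tilde_Suc(1)[where C="peel m a C" and n=n, OF top]
  show "pm_eval m m n (peel m a C) 1 = pm_eval m m (Suc n) C 1"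
    using P'(2)[of 1] by (simp add: drop)
  have "det (pm_eval m m n (peel m a C) 0) = c * 0 ^ n"
    using isCont_eq_at[OF isCont_det_pm_eval _ det_peel[unfolded drop]] by (simp add: continuous_intros)
  then show "det_monomial m n (peel m a C)"
    unfolding det_monomial_def using det_peel by (metis drop)
qed

lemma peel_row_top_zero:
  assumes R: "\<And>k. R k \<in> carrier_mat 1 m" and Z: "R (Suc (Suc n)) = 0\<^sub>m 1 m"
    and s: "sqnorm m a \<noteq> 0" and a: "a = row_fun m (R (Suc n)) 0"
  shows "peel m a R (Suc n) = 0\<^sub>m 1 m"
proof (rule eq_matI)
  fix i j assume "i < dim_row (0\<^sub>m 1 m :: complex mat)" "j < dim_col (0\<^sub>m 1 m :: complex mat)"
  then have i: "i = 0" and j: "j < m" by auto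
  have "(R (Suc n) * elem_mat m a 0) $$ (0,j) = 0"
    by (rule row_mult_elem_mat_0[OF s R _ _ j], auto simp: a row_fun_def)
  then show "peel m a R (Suc n) $$ (i,j) = 0\<^sub>m 1 m $$ (i,j)"
    using i j by (simp add: index_peel[OF R _ j] Z)
qed (use peel_carrier[where C=R and r=1 and m=m, OF R] in auto)

lemma peel_leading_row_nonzero:
  assumes s: "sqnorm m a \<noteq> 0" and C: "\<And>k. C k \<in> carrier_mat r m" and C0: "C 0 * proj_mat m a = 0\<^sub>m r m"
    and top: "peel m a C (Suc n) = 0\<^sub>m r m" and i: "i < r" and j0: "j0 < m" and nz: "C (Suc n) $$ (i,j0) \<noteq> 0"
  shows "\<exists>j<m. peel m a C n $$ (i,j) \<noteq> 0"
proof (rule ccontr)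
  assume "\<not> ?thesis"
  then have row: "peel m a C n $$ (i,l) = 0" if "l < m" for l using that by auto
  note D = peel_carrier[where C=C and r=r and m=m and a=a, OF C]
  have "C (Suc n) $$ (i,j0) = unpeel m a (peel m a C) (Suc n) $$ (i,j0)"
    by (simp add: unpeel_peel[where C=C and r=r and m=m and a=a, OF s C C0])
  also have "\<dots> = (\<Sum>l\<in>{0..<m}. peel m a C n $$ (i,l) * proj_mat m a $$ (l,j0))"
    using i j0 by (simp add: index_unpeel[OF D i j0] top index_mult_mat_sum[OF D proj_mat_carrier i j0])
  also have "\<dots> = 0" by (simp add: row)
  finally show False using nz by simp
qed

lemma sqnorm_row_fun_nonzero:
  "j < m \<Longrightarrow> A $$ (i,j) \<noteq> 0 \<Longrightarrow> sqnorm m (row_fun m A i) \<noteq> 0"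
  by (rule sqnorm_nonzero[of j]) (simp_all add: row_fun_def)

lemma paraunitary_row_peel:
  assumes P: "paraunitary 1 m (Suc n) R" and a: "a = row_fun m (R (Suc n)) 0"
    and j0: "j0 < m" and nz: "R (Suc n) $$ (0,j0) \<noteq> 0"
  shows "R 0 * proj_mat m a = 0\<^sub>m 1 m" and "paraunitary 1 m n (peel m a R)"
    and "pm_eval 1 m n (peel m a R) 1 = pm_eval 1 m (Suc n) R 1"
    and "\<exists>j<m. peel m a R n $$ (0,j) \<noteq> 0"
proof -
  note R = paraunitaryD(1)[OF P]
  have s: "sqnorm m a \<noteq> 0" using sqnorm_row_fun_nonzero[OF j0 nz] a by simp
  show R0: "R 0 * proj_mat m a = 0\<^sub>m 1 m" by (rule lowest_coeff_mult_proj[OF P _ _ a]) auto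
  note P' = paraunitary_peel[OF P s R0]
  have top: "peel m a R (Suc n) = 0\<^sub>m 1 m"
    using peel_row_top_zero[where R=R and m=m and n=n, OF R _ s a] paraunitaryD(2)[OF P, of "Suc (Suc n)"]
    by simp
  show "paraunitary 1 m n (peel m a R)" by (rule paraunitary_lower_degree[OF P'(1) top])
  show "pm_eval 1 m n (peel m a R) 1 = pm_eval 1 m (Suc n) R 1"
    using P'(2)[of 1] unfolding pm_eval_tilde_Suc(1)[where C="peel m a R" and n=n, OF top] by simp
  show "\<exists>j<m. peel m a R n $$ (0,j) \<noteq> 0"
    by (rule peel_leading_row_nonzero[OF s R R0 top _ j0 nz]) simp
qed

lemma paraunitary_completion_unique:
  "paraunitary m m n C \<Longrightarrow> det_monomial m n C \<Longrightarrow> paraunitary m m n C' \<Longrightarrow> det_monomial m n C' \<Longrightarrow>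
   pm_eval m m n C 1 = pm_eval m m n C' 1 \<Longrightarrow> (\<And>k j. j < m \<Longrightarrow> C k $$ (0,j) = C' k $$ (0,j)) \<Longrightarrow>
   j0 < m \<Longrightarrow> C n $$ (0,j0) \<noteq> 0 \<Longrightarrow> C = C'"
proof (induction n arbitrary: C C' j0)
  case 0
  note P = "0.prems"(1) and P' = "0.prems"(3)
  have "C 0 = C' 0"
    using "0.prems"(5) pm_eval_deg0[OF paraunitaryD(1)[OF P]] pm_eval_deg0[OF paraunitaryD(1)[OF P']] by simp
  then show ?case using paraunitaryD(2)[OF P] paraunitaryD(2)[OF P'] by (metis neq0_conv)
next
  case (Suc n)
  note P = Suc.prems(1) and P' = Suc.prems(3)
  note C = paraunitaryD(1)[OF P] and C' = paraunitaryD(1)[OF P']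
  define a where "a = row_fun m (C (Suc n)) 0"
  have a': "a = row_fun m (C' (Suc n)) 0" using Suc.prems(6) by (auto simp: a_def row_fun_def)
  have s: "sqnorm m a \<noteq> 0" unfolding a_def by (rule sqnorm_row_fun_nonzero[OF Suc.prems(7,8)])
  have m0: "0 < m" using Suc.prems(7) by simp
  have C0: "C 0 * proj_mat m a = 0\<^sub>m m m" by (rule lowest_coeff_mult_proj[OF P _ m0 a_def]) simp
  have C0': "C' 0 * proj_mat m a = 0\<^sub>m m m" by (rule lowest_coeff_mult_proj[OF P' _ m0 a']) simp
  note S = paraunitary_det_peel[OF P Suc.prems(2) s C0] and S' = paraunitary_det_peel[OF P' Suc.prems(4) s C0']
  obtain j1 where "j1 < m" "peel m a C n $$ (0,j1) \<noteq> 0"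
    using peel_leading_row_nonzero[OF s C C0 S(1) m0 Suc.prems(7,8)] by blast
  with Suc.IH[OF S(2,3) S'(2,3)] Suc.prems(5,6) S(4) S'(4)
  have "peel m a C = peel m a C'"
    using peel_row_eq[OF C C' m0 m0] by simp
  then show ?case using unpeel_peel[where C=C and r=m and m=m, OF s C C0] unpeel_peel[where C=C' and r=m and m=m, OF s C' C0']
    by metis
qed

definition entries_in :: "complex set \<Rightarrow> complex mat \<Rightarrow> bool" where
  "entries_in F A \<longleftrightarrow> (\<forall>i<dim_row A. \<forall>j<dim_col A. A $$ (i,j) \<in> F)"

context
  fixes F :: "complex set"
  assumes F: "conj_closed_subfield F"
begin

lemma subfield_zero: "0 \<in> F" and subfield_one: "1 \<in> F"
  and subfield_add: "x \<in> F \<Longrightarrow> y \<in> F \<Longrightarrow> x + y \<in> F"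
  and subfield_mult: "x \<in> F \<Longrightarrow> y \<in> F \<Longrightarrow> x * y \<in> F"
  and subfield_uminus: "x \<in> F \<Longrightarrow> - x \<in> F"
  and subfield_cnj: "x \<in> F \<Longrightarrow> cnj x \<in> F"
  using F unfolding conj_closed_subfield_def by auto

lemma subfield_divide: assumes "x \<in> F" "y \<in> F" shows "x / y \<in> F"
  using F assms subfield_mult subfield_zero unfolding conj_closed_subfield_def divide_inverse
  by (cases "y = 0") auto

lemma subfield_diff: "x \<in> F \<Longrightarrow> y \<in> F \<Longrightarrow> x - y \<in> F"
  using subfield_add[of x "- y"] subfield_uminus[of y] by simp

lemma subfield_sum: "(\<And>x. x \<in> S \<Longrightarrow> f x \<in> F) \<Longrightarrow> sum f S \<in> F"
  by (induction S rule: infinite_finite_induct) (auto intro: subfield_zero subfield_add)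

lemma entries_in_zero: "entries_in F (0\<^sub>m r m)"
  by (simp add: entries_in_def subfield_zero)

lemma entries_in_add:
  "entries_in F A \<Longrightarrow> entries_in F B \<Longrightarrow> B \<in> carrier_mat (dim_row A) (dim_col A) \<Longrightarrow> entries_in F (A + B)"
  by (auto simp: entries_in_def intro!: subfield_add)

lemma entries_in_mult:
  "entries_in F A \<Longrightarrow> entries_in F B \<Longrightarrow> dim_col A = dim_row B \<Longrightarrow> entries_in F (A * B)"
  unfolding entries_in_def by (auto simp: scalar_prod_def intro!: subfield_sum subfield_mult)

lemma entries_in_proj_mat: "(\<And>l. l < m \<Longrightarrow> a l \<in> F) \<Longrightarrow> entries_in F (proj_mat m a)"
  unfolding entries_in_def proj_mat_def sqnorm_def
  by (auto intro!: subfield_divide subfield_mult subfield_cnj subfield_sum)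

lemma entries_in_elem_mat_0: "(\<And>l. l < m \<Longrightarrow> a l \<in> F) \<Longrightarrow> entries_in F (elem_mat m a 0)"
  unfolding entries_in_def elem_mat_def sqnorm_def
  by (auto intro!: subfield_add subfield_diff subfield_uminus subfield_mult subfield_divide subfield_cnj subfield_sum
      subfield_zero subfield_one)

lemma entries_in_peel:
  assumes C: "\<And>k. C k \<in> carrier_mat r m" and CF: "\<And>k. entries_in F (C k)" and aF: "\<And>l. l < m \<Longrightarrow> a l \<in> F"
  shows "entries_in F (peel m a C k)"
proof -
  have "dim_row (C k) = r" "dim_col (C k) = m" for k using C[of k] by auto
  then show ?thesis unfolding peel_def
    by (intro entries_in_add entries_in_mult CF entries_in_proj_mat entries_in_elem_mat_0 aF) auto
qed

lemma entries_in_unpeel: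
  assumes B: "\<And>k. B k \<in> carrier_mat r m" and BF: "\<And>k. entries_in F (B k)" and aF: "\<And>l. l < m \<Longrightarrow> a l \<in> F"
  shows "entries_in F (unpeel m a B k)"
proof -
  have "dim_row (B k) = r" "dim_col (B k) = m" for k using B[of k] by auto
  then show ?thesis unfolding unpeel_def
    by (auto intro!: entries_in_add entries_in_mult BF entries_in_proj_mat entries_in_elem_mat_0 aF)
qed

lemma entries_in_row_fun:
  "entries_in F A \<Longrightarrow> A \<in> carrier_mat r m \<Longrightarrow> i < r \<Longrightarrow> row_fun m A i l \<in> F"
  by (auto simp: entries_in_def row_fun_def subfield_zero)

lemma WM_iff:
  "WM m n F C \<longleftrightarrow> paraunitary m m n C \<and> (\<forall>k. entries_in F (C k)) \<and> C n \<noteq> 0\<^sub>m m m \<and> det_monomial m n C"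
proof -
  have "(\<forall>k\<le>n. \<forall>i<m. \<forall>j<m. C k $$ (i,j) \<in> F) \<longleftrightarrow> (\<forall>k. entries_in F (C k))"
    if "\<forall>k. C k \<in> carrier_mat m m" "\<forall>k>n. C k = 0\<^sub>m m m"
    using that entries_in_zero by (metis entries_in_def carrier_matD not_le)
  then show ?thesis
    unfolding WM_def paraunitary_def det_monomial_def pm_eval_def pm_tilde_def mpoly_eval_def mpoly_tilde_eval_def
    by blast
qed

lemma WM_unpeel:
  assumes B: "WM m n F B" and aF: "\<And>l. l < m \<Longrightarrow> a l \<in> F" and s: "sqnorm m a \<noteq> 0"
    and top: "unpeel m a B (Suc n) \<noteq> 0\<^sub>m m m"
  shows "WM m (Suc n) F (unpeel m a B)"
proof -
  from B have P: "paraunitary m m n B" and BF: "\<And>k. entries_in F (B k)" and "det_monomial m n B"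
    unfolding WM_iff by auto
  then obtain c where dt: "\<And>z. det (pm_eval m m n B z) = c * z ^ n" unfolding det_monomial_def by auto
  have "det (pm_eval m m (Suc n) (unpeel m a B) z) = c * z ^ Suc n" for z
    by (simp add: paraunitary_unpeel(2)[OF P s] det_mult[OF pm_eval_carrier elem_mat_carrier]
        det_elem_mat[OF s] dt)
  then have "det_monomial m (Suc n) (unpeel m a B)" unfolding det_monomial_def by blast
  then show ?thesis unfolding WM_iff
    using paraunitary_unpeel(1)[OF P s] entries_in_unpeel[where B=B and r=m and m=m and a=a, OF paraunitaryD(1)[OF P] BF aF] top by blast
qed

lemma exists_WM_completion:
  assumes V: "V \<in> carrier_mat m m" and VF: "entries_in F V" and VU: "V * conj_transpose V = 1\<^sub>m m"
  shows "paraunitary 1 m n R \<Longrightarrow> (\<And>k. entries_in F (R k)) \<Longrightarrow> j0 < m \<Longrightarrow> R n $$ (0,j0) \<noteq> 0 \<Longrightarrow>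
    (\<And>j. j < m \<Longrightarrow> pm_eval 1 m n R 1 $$ (0,j) = V $$ (0,j)) \<Longrightarrow>
    \<exists>C. WM m n F C \<and> pm_eval m m n C 1 = V \<and> (\<forall>k. \<forall>j<m. C k $$ (0,j) = R k $$ (0,j))"
proof (induction n arbitrary: R j0)
  case 0
  define C where "C k = (if k = 0 then V else 0\<^sub>m m m)" for k :: nat
  have C: "C k \<in> carrier_mat m m" for k using V by (simp add: C_def)
  have ev: "pm_eval m m 0 C z = V" and ti: "pm_tilde m m 0 C z = conj_transpose V" for z
    using pm_eval_deg0[of C m m z] pm_tilde_deg0[of C m m z] C[of 0] by (simp_all add: C_def)
  have rows: "C k $$ (0,j) = R k $$ (0,j)" if j: "j < m" for k j
  proof (cases "k = 0")
    case True
    then show ?thesis using "0.prems"(5)[OF j] pm_eval_deg0[OF paraunitaryD(1)[OF "0.prems"(1)]] by (simp add: C_def)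
  qed (use j paraunitaryD(2)[OF "0.prems"(1), of k] in \<open>simp add: C_def\<close>)
  have "C 0 \<noteq> 0\<^sub>m m m" using rows[OF "0.prems"(3), of 0] "0.prems"(3,4) by auto
  moreover have "paraunitary m m 0 C" unfolding paraunitary_def using C VU by (simp add: ev ti C_def)
  moreover have "entries_in F (C k)" for k using VF entries_in_zero by (simp add: C_def)
  moreover have "det_monomial m 0 C" unfolding det_monomial_def ev by simp
  ultimately show ?case unfolding WM_iff using ev rows by blast
next
  case (Suc n)
  note R = paraunitaryD(1)[OF Suc.prems(1)]
  define a where "a = row_fun m (R (Suc n)) 0"
  note S = paraunitary_row_peel[OF Suc.prems(1) a_def Suc.prems(3,4)]
  have aF: "a l \<in> F" for l unfolding a_def by (rule entries_in_row_fun[OF Suc.prems(2) R]) simp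
  have s: "sqnorm m a \<noteq> 0" unfolding a_def by (rule sqnorm_row_fun_nonzero[OF Suc.prems(3,4)])
  obtain j1 where j1: "j1 < m" and nz1: "peel m a R n $$ (0,j1) \<noteq> 0" using S(4) by blast
  have "pm_eval 1 m n (peel m a R) 1 $$ (0,j) = V $$ (0,j)" if "j < m" for j
    using Suc.prems(5)[OF that] S(3) by simp
  with Suc.IH[OF S(2) entries_in_peel[where C=R and r=1 and m=m, OF R Suc.prems(2) aF] j1 nz1]
  obtain B where B: "WM m n F B" "pm_eval m m n B 1 = V" and Brow: "\<forall>k. \<forall>j<m. B k $$ (0,j) = peel m a R k $$ (0,j)"
    by blast
  note PB = paraunitaryD(1)[OF B(1)[unfolded WM_iff, THEN conjunct1]]
  have rows: "unpeel m a B k $$ (0,j) = R k $$ (0,j)" if j: "j < m" for k j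
    using unpeel_row_eq[where B=B and B'="peel m a R" and r=m and r'=1, OF PB peel_carrier[where C=R, OF R] _ _ _ j, of 0 0 a k]
      Brow unpeel_peel[where C=R and r=1 and m=m, OF s R S(1)] V j
    by (auto simp: carrier_matD)
  have "unpeel m a B (Suc n) \<noteq> 0\<^sub>m m m" using rows[OF Suc.prems(3), of "Suc n"] Suc.prems(3,4) by auto
  with B(1) have "WM m (Suc n) F (unpeel m a B)" by (rule WM_unpeel[OF _ aF s])
  moreover have "pm_eval m m (Suc n) (unpeel m a B) 1 = V"
    using paraunitary_unpeel(2)[OF B(1)[unfolded WM_iff, THEN conjunct1] s] B(2) V by simp
  ultimately show ?case using rows by blast
qed

lemma WM_unique_by_first_row:
  assumes C: "WM m n F C" and C': "WM m n F C'" and one: "pm_eval m m n C 1 = pm_eval m m n C' 1"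
    and rows: "\<And>k j. k \<le> n \<Longrightarrow> j < m \<Longrightarrow> C k $$ (0,j) = C' k $$ (0,j)"
    and j0: "j0 < m" and lead: "C n $$ (0,j0) \<noteq> 0"
  shows "C = C'"
proof (rule paraunitary_completion_unique[OF _ _ _ _ one _ j0 lead])
  show "paraunitary m m n C" "det_monomial m n C" "paraunitary m m n C'" "det_monomial m n C'"
    using C C' unfolding WM_iff by auto
  show "C k $$ (0,j) = C' k $$ (0,j)" if j: "j < m" for k j
  proof (cases "k \<le> n")
    case False
    then have "C k = 0\<^sub>m m m" "C' k = 0\<^sub>m m m" using C C' unfolding WM_def by auto
    then show ?thesis using j by simp
  qed (use rows j in simp)
qed

end

definition row_poly :: "nat \<Rightarrow> nat \<Rightarrow> (nat \<Rightarrow> nat \<Rightarrow> complex) \<Rightarrow> nat \<Rightarrow> complex mat" where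
  "row_poly m N \<alpha> k = (if k \<le> N then mat 1 m (\<lambda>(_,j). \<alpha> k j) else 0\<^sub>m 1 m)"

lemma index_row_poly: "j < m \<Longrightarrow> row_poly m N \<alpha> k $$ (0,j) = (if k \<le> N then \<alpha> k j else 0)"
  by (simp add: row_poly_def)

lemma index_pm_eval_row_poly:
  "j < m \<Longrightarrow> pm_eval 1 m N (row_poly m N \<alpha>) z $$ (0,j) = (\<Sum>k\<le>N. \<alpha> k j * z ^ k)"
  by (simp add: index_pm_eval index_row_poly)

lemma index_pm_tilde_row_poly:
  "j < m \<Longrightarrow> pm_tilde 1 m N (row_poly m N \<alpha>) z $$ (j,0) = (\<Sum>k\<le>N. cnj (\<alpha> k j) * inverse z ^ k)"
  by (simp add: index_pm_tilde index_row_poly)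

lemma paraunitary_row_poly:
  assumes para: "\<And>z. z \<noteq> 0 \<Longrightarrow>
    (\<Sum>j<m. (\<Sum>k\<le>N. \<alpha> k j * z ^ k) * (\<Sum>k\<le>N. cnj (\<alpha> k j) * inverse z ^ k)) = 1"
  shows "paraunitary 1 m N (row_poly m N \<alpha>)"
  unfolding paraunitary_def
proof (intro conjI allI impI)
  fix z :: complex assume z: "z \<noteq> 0"
  show "pm_eval 1 m N (row_poly m N \<alpha>) z * pm_tilde 1 m N (row_poly m N \<alpha>) z = 1\<^sub>m 1"
  proof (rule eq_matI)
    fix i j assume "i < dim_row (1\<^sub>m 1 :: complex mat)" "j < dim_col (1\<^sub>m 1 :: complex mat)"
    then have "i = 0" "j = 0" by auto
    moreover have "(pm_eval 1 m N (row_poly m N \<alpha>) z * pm_tilde 1 m N (row_poly m N \<alpha>) z) $$ (0,0) = 1"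
      unfolding index_mult_mat_sum[OF pm_eval_carrier pm_tilde_carrier less_one[of 0, THEN iffD2, OF refl] less_one[of 0, THEN iffD2, OF refl]]
        atLeast0LessThan using para[OF z]
      by (metis (no_types, lifting) sum.cong lessThan_iff index_pm_eval_row_poly index_pm_tilde_row_poly)
    ultimately show "(pm_eval 1 m N (row_poly m N \<alpha>) z * pm_tilde 1 m N (row_poly m N \<alpha>) z) $$ (i,j)
        = 1\<^sub>m 1 $$ (i,j)" by simp
  qed auto
qed (auto simp: row_poly_def)

lemma mpoly_eval_eq_pm_eval: "mpoly_eval m N C z = pm_eval m m N C z"
  by (simp add: mpoly_eval_def pm_eval_def)

theorem theorem3:
  fixes F :: "complex set" and m N :: nat
    and v :: "nat \<Rightarrow> complex" and V :: "complex mat"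
    and \<alpha> :: "nat \<Rightarrow> nat \<Rightarrow> complex"
  assumes F: "conj_closed_subfield F"
    and m: "m \<ge> 2" and N: "N \<ge> 1"
    and v_F: "\<forall>j<m. v j \<in> F"
    and v_unit: "(\<Sum>j<m. (cmod (v j))\<^sup>2) = 1"
    and V_dim: "V \<in> carrier_mat m m"
    and V_F: "\<forall>i<m. \<forall>j<m. V $$ (i,j) \<in> F"
    and V_unitary: "V * conj_transpose V = 1\<^sub>m m"
    and V_row: "\<forall>j<m. V $$ (0,j) = v j"
    and \<alpha>_F: "\<forall>k\<le>N. \<forall>j<m. \<alpha> k j \<in> F"
    and \<alpha>_lead: "(\<Sum>j<m. cmod (\<alpha> N j)) > 0"
    and A1_para: "\<forall>z::complex. z \<noteq> 0 \<longrightarrow>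
        (\<Sum>j<m. (\<Sum>k\<le>N. \<alpha> k j * z ^ k) * (\<Sum>k\<le>N. cnj (\<alpha> k j) * inverse z ^ k)) = 1"
    and A1_at1: "\<forall>j<m. (\<Sum>k\<le>N. \<alpha> k j) = v j"
  shows "\<exists>!C. WM m N F C \<and> mpoly_eval m N C 1 = V \<and>
            (\<forall>k\<le>N. \<forall>j<m. C k $$ (0,j) = \<alpha> k j)"
proof -
  obtain j0 where j0: "j0 < m" and lead: "\<alpha> N j0 \<noteq> 0"
    using \<alpha>_lead by (metis (mono_tags, lifting) lessThan_iff norm_zero sum.neutral less_irrefl)
  let ?R = "row_poly m N \<alpha>"
  have P: "paraunitary 1 m N ?R" using A1_para by (intro paraunitary_row_poly) auto
  have RF: "entries_in F (?R k)" for k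
    using \<alpha>_F subfield_zero[OF F] by (auto simp: entries_in_def row_poly_def)
  have VF: "entries_in F V" using V_F V_dim by (auto simp: entries_in_def)
  have "pm_eval 1 m N ?R 1 $$ (0,j) = V $$ (0,j)" if "j < m" for j
    using that A1_at1 V_row unfolding index_pm_eval_row_poly[OF that] by simp
  moreover have "?R N $$ (0,j0) \<noteq> 0" using j0 lead by (simp add: index_row_poly)
  ultimately obtain C
    where C: "WM m N F C" "pm_eval m m N C 1 = V" "\<forall>k. \<forall>j<m. C k $$ (0,j) = ?R k $$ (0,j)"
    using exists_WM_completion[OF F V_dim VF V_unitary P RF j0] by blast
  show ?thesis
  proof (rule ex1I[of _ C])
    show "WM m N F C \<and> mpoly_eval m N C 1 = V \<and> (\<forall>k\<le>N. \<forall>j<m. C k $$ (0,j) = \<alpha> k j)"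
      using C by (simp add: mpoly_eval_eq_pm_eval index_row_poly)
  next
    fix C' assume "WM m N F C' \<and> mpoly_eval m N C' 1 = V \<and> (\<forall>k\<le>N. \<forall>j<m. C' k $$ (0,j) = \<alpha> k j)"
    with C j0 lead show "C' = C"
      by (intro WM_unique_by_first_row[OF F, of m N C' C j0]) (auto simp: mpoly_eval_eq_pm_eval index_row_poly)
  qed
qed

end
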